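(* Let $\mu,\nu$ be laws of noisy processes with noise variances $\sigma_\mu^2,\sigma_\nu^2>0$. Let $\tilde I\subseteq I$ be dense in $I$. If $P_{\mathbf x}\mu=P_{\mathbf x}\nu$ for all $\mathbf x\in\tilde I$, then $P_{\mathbf x}\mu=P_{\mathbf x}\nu$ for all $\mathbf x\in I$, i.e. $\mu=\nu$. Moreover, if $\mu$ and $\nu$ are Gaussian noisy processes, the same conclusion holds if $\tilde I\subseteq\mathbb R^n$ is merely dense in $\mathbb R^n$ for some fixed $n\ge2$.
   Context: $I=\bigcup_{n\ge1}\mathbb R^n$ is the set of finite tuples of inputs (entries possibly repeated), topologised as the disjoint union of the Euclidean spaces $\mathbb R^n$. A stochastic process $f$ on $\mathbb R$ is noisy with noise variance $\sigma^2>0$ if $f=f^{\mathrm s}+f^{\mathrm n}$ with $f^{\mathrm s},f^{\mathrm n}$ independent, $f^{\mathrm s}$ (smooth part) having continuous sample paths, and $(f^{\mathrm n}(x_1),\dots,f^{\mathrm n}(x_n))\sim\mathcal N(\mathbf 0,\sigma^2\mathbf I_n)$ for all pairwise distinct $x_1,\dots,x_n$. It is a Gaussian noisy process if $f^{\mathrm s}$ is a Gaussian process. Convention: for a noisy process with law $\mu$ and $\mathbf x=(x_1,\dots,x_n)\in I$, $P_{\mathbf x}\mu$ denotes the law of $(f^{\mathrm s}(x_1),\dots,f^{\mathrm s}(x_n))+\boldsymbol\varepsilon$ with $\boldsymbol\varepsilon\sim\mathcal N(\mathbf 0,\sigma^2\mathbf I_n)$ independent of $f^{\mathrm s}$; two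 noisy processes are equal ($\mu=\nu$) iff $P_{\mathbf x}\mu=P_{\mathbf x}\nu$ for all $\mathbf x\in I$. *)

theory Defs
  imports "HOL-Probability.Probability"
begin

text \<open>A noisy process is represented by a probability space M, the smooth part
  fs (a random function with continuous sample paths, each evaluation measurable)
  and the noise standard deviation s > 0 (noise variance s^2).  Finite input
  tuples in I are nonempty real lists.\<close>

definition noisy_process :: "'a measure \<Rightarrow> ('a \<Rightarrow> real \<Rightarrow> real) \<Rightarrow> real \<Rightarrow> bool" where
  "noisy_process M fs s \<longleftrightarrow> prob_space M \<and> s > 0 \<and>
     (\<forall>x. (\<lambda>\<omega>. fs \<omega> x) \<in> borel_measurable M) \<and>
     (\<forall>\<omega>\<in>space M. continuous_on UNIV (fs \<omega>))"

definition noise :: "nat \<Rightarrow> real \<Rightarrow> (nat \<Rightarrow> real) measure" where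
  "noise n s = PiM {..<n} (\<lambda>_. density lborel (normal_density 0 s))"

definition Px :: "'a measure \<Rightarrow> ('a \<Rightarrow> real \<Rightarrow> real) \<Rightarrow> real \<Rightarrow> real list \<Rightarrow> (nat \<Rightarrow> real) measure" where
  "Px M fs s xs = distr (M \<Otimes>\<^sub>M noise (length xs) s) (PiM {..<length xs} (\<lambda>_. borel))
     (\<lambda>(\<omega>, e). \<lambda>i\<in>{..<length xs}. fs \<omega> (xs ! i) + e i)"

definition real_gaussian :: "'a measure \<Rightarrow> ('a \<Rightarrow> real) \<Rightarrow> bool" where
  "real_gaussian M X \<longleftrightarrow>
     (\<exists>m s. s > 0 \<and> distributed M lborel X (normal_density m s)) \<or>
     (X \<in> borel_measurable M \<and> (\<exists>c. AE \<omega> in M. X \<omega> = c))"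

definition gaussian_process :: "'a measure \<Rightarrow> ('a \<Rightarrow> real \<Rightarrow> real) \<Rightarrow> bool" where
  "gaussian_process M fs \<longleftrightarrow>
     (\<forall>xs cs. length cs = length xs \<longrightarrow>
        real_gaussian M (\<lambda>\<omega>. \<Sum>i<length xs. cs ! i * fs \<omega> (xs ! i)))"

text \<open>J is dense in R^n (tuples of length n; sup-metric, same topology as Euclidean).\<close>
definition dense_in_Rn :: "nat \<Rightarrow> real list set \<Rightarrow> bool" where
  "dense_in_Rn n J \<longleftrightarrow> (\<forall>xs. length xs = n \<longrightarrow>
     (\<forall>e>0. \<exists>ys\<in>J. length ys = n \<and> (\<forall>i<n. \<bar>ys ! i - xs ! i\<bar> < e)))"

text \<open>J dense in I = disjoint union of the R^n, n >= 1.\<close>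
definition dense_in_I :: "real list set \<Rightarrow> bool" where
  "dense_in_I J \<longleftrightarrow> (\<forall>n\<ge>1. dense_in_Rn n J)"

end

theory Submission
  imports Defs
begin

text \<open>The noise has a Gaussian density, so Px M f s xs has the Lebesgue density
  y \<mapsto> E (\<Prod>i. \<phi>(y i - f (x i))), with \<phi> the N(0, s^2) density.  As the sample paths are
  continuous and \<phi> is bounded, dominated convergence makes this density continuous in the
  inputs.  Densities agreeing almost everywhere along a sequence of inputs thus agree almost
  everywhere at the limit, so equality on a dense set of inputs propagates to all inputs.

  For Gaussian processes a dense subset of one R^n, n \<ge> 2, suffices: by the first step the
  laws agree on all of R^n.  The characteristic function of a two-coordinate marginal is that
  of (f x, f y) times a Gaussian factor; this determines the noise variance and the laws of all
  a f x + b f y, hence the mean and covariance functions, hence, by Gaussianity, the laws of all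
  linear combinations of evaluations.  Writing each Gaussian factor of the density as a Fourier
  integral shows that the density depends only on these laws.\<close>

lemma noisy_processD:
  assumes "noisy_process M f s"
  shows "prob_space M" "0 < s" "(\<lambda>\<omega>. f \<omega> x) \<in> borel_measurable M"
    "\<omega> \<in> space M \<Longrightarrow> continuous_on UNIV (f \<omega>)"
  using assms by (auto simp: noisy_process_def)

lemma normal_density_le: "normal_density m s x \<le> 1 / sqrt (2 * pi * s\<^sup>2)"
proof -
  have "exp (- ((x - m)\<^sup>2 / (2 * s\<^sup>2))) \<le> 1" by simp
  then show ?thesis unfolding normal_density_def by (simp add: divide_right_mono)
qed

lemma prod_normal_density_le:
  "(\<Prod>i\<in>I. normal_density (m i) s (x i)) \<le> (1 / sqrt (2 * pi * s\<^sup>2)) ^ card I"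
proof -
  have "(\<Prod>i\<in>I. normal_density (m i) s (x i)) \<le> (\<Prod>i\<in>I. 1 / sqrt (2 * pi * s\<^sup>2))"
    by (intro prod_mono) (auto simp: normal_density_le)
  then show ?thesis by simp
qed

lemma normal_density_eq_char_std_normal:
  assumes s: "0 < s"
  shows "complex_of_real (normal_density m s v)
    = complex_of_real (1 / sqrt (2 * pi * s\<^sup>2)) * char std_normal_distribution ((v - m) / s)"
proof -
  have "(v - m)\<^sup>2 / (2 * s\<^sup>2) = ((v - m) / s)\<^sup>2 / 2" using s by (simp add: power_divide)
  then show ?thesis
    unfolding normal_density_def[of m s v] by (simp add: char_std_normal_distribution)
qed

lemma char_centered_normal:
  assumes s: "0 < s"
  shows "(\<integral>x. iexp (a * x) \<partial>density lborel (normal_density 0 s))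
    = complex_of_real (exp (- (s * a)\<^sup>2 / 2))"
proof -
  have "(\<integral>x. iexp (a * x) \<partial>density lborel (normal_density 0 s))
      = (\<integral>x. normal_density 0 s x *\<^sub>R iexp (a * x) \<partial>lborel)"
    by (subst integral_density) auto
  also have "\<dots> = \<bar>s\<bar> *\<^sub>R (\<integral>z. normal_density 0 s (0 + s * z) *\<^sub>R iexp (a * (0 + s * z)) \<partial>lborel)"
    using s by (intro lborel_integral_real_affine) auto
  also have "\<dots> = (\<integral>z. std_normal_density z *\<^sub>R iexp ((s * a) * z) \<partial>lborel)"
  proof -
    have "\<And>z. normal_density 0 s (s * z) = std_normal_density z / s"
      using s by (simp add: normal_density_def power_mult_distrib real_sqrt_mult field_simps)
    then show ?thesis using s by (simp add: scaleR_conv_of_real mult_ac)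
  qed
  also have "\<dots> = char std_normal_distribution (s * a)"
    unfolding char_def by (subst integral_density) auto
  finally show ?thesis by (simp add: char_std_normal_distribution)
qed

lemma prod_normal_density_eq_integral:
  assumes s: "0 < s"
  shows "complex_of_real (\<Prod>i<m. normal_density (\<mu> i) s (y i))
    = complex_of_real ((1 / sqrt (2 * pi * s\<^sup>2)) ^ m)
      * (\<integral>z. iexp (\<Sum>i<m. ((y i - \<mu> i) / s) * z i) \<partial>PiM {..<m} (\<lambda>_. std_normal_distribution))"
proof -
  interpret Z: product_prob_space "\<lambda>_::nat. std_normal_distribution"
    by (intro product_prob_spaceI prob_space_normal_density) simp
  have "complex_of_real (\<Prod>i<m. normal_density (\<mu> i) s (y i))
      = (\<Prod>i<m. complex_of_real (1 / sqrt (2 * pi * s\<^sup>2))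
                  * char std_normal_distribution ((y i - \<mu> i) / s))"
    by (simp add: normal_density_eq_char_std_normal[OF s])
  also have "\<dots> = complex_of_real ((1 / sqrt (2 * pi * s\<^sup>2)) ^ m)
      * (\<Prod>i<m. char std_normal_distribution ((y i - \<mu> i) / s))"
    unfolding prod.distrib prod_constant card_lessThan of_real_power ..
  also have "(\<Prod>i<m. char std_normal_distribution ((y i - \<mu> i) / s))
      = (\<integral>z. (\<Prod>i<m. iexp (((y i - \<mu> i) / s) * z i)) \<partial>PiM {..<m} (\<lambda>_. std_normal_distribution))"
    unfolding char_def
    by (rule Z.product_integral_prod[symmetric])
      (auto intro!: Z.M.integrable_const_bound[where B=1] simp: norm_exp_i_times)
  finally show ?thesis by (simp add: exp_sum[symmetric] sum_distrib_left)
qed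

lemma nn_integral_normal_density_shift:
  assumes [measurable]: "A \<in> sets borel"
  shows "(\<integral>\<^sup>+ x. ennreal (normal_density 0 s x) * indicator A (c + x) \<partial>lborel)
       = (\<integral>\<^sup>+ y. ennreal (normal_density c s y) * indicator A y \<partial>lborel)"
proof -
  have "(\<integral>\<^sup>+ y. ennreal (normal_density c s y) * indicator A y \<partial>lborel)
     = (\<integral>\<^sup>+ y. ennreal (normal_density c s y) * indicator A y \<partial>distr lborel borel ((+) c))"
    by (simp add: lborel_distr_plus)
  also have "\<dots> = (\<integral>\<^sup>+ x. ennreal (normal_density c s (c + x)) * indicator A (c + x) \<partial>lborel)"
    by (subst nn_integral_distr) auto
  finally show ?thesis by (simp add: normal_density_def)
qed

lemma distr_noise_shift:
  assumes s: "0 < s"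
  shows "distr (noise n s) (PiM {..<n} (\<lambda>_. borel)) (\<lambda>e. \<lambda>i\<in>{..<n}. c i + e i)
   = PiM {..<n} (\<lambda>i. density lborel (normal_density (c i) s))"
proof -
  let ?M = "\<lambda>i. density lborel (normal_density (c i) s)"
  let ?shift = "\<lambda>e. \<lambda>i\<in>{..<n}. c i + e i"
  interpret P: product_prob_space ?M
    using s by (intro product_prob_spaceI prob_space_normal_density)
  interpret P0: product_prob_space "\<lambda>_. density lborel (normal_density 0 s)"
    using s by (intro product_prob_spaceI prob_space_normal_density)
  show ?thesis
  proof (rule P.PiM_eqI)
    show "sets (distr (noise n s) (PiM {..<n} (\<lambda>_. borel)) ?shift) = sets (PiM {..<n} ?M)"
      by (simp, intro sets_PiM_cong) auto
  next
    fix A assume "\<And>i. i \<in> {..<n} \<Longrightarrow> A i \<in> sets (?M i)"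
    then have A[measurable]: "\<And>i. i \<in> {..<n} \<Longrightarrow> A i \<in> sets borel" by simp
    have meas: "?shift \<in> measurable (noise n s) (PiM {..<n} (\<lambda>_. borel))"
      unfolding noise_def by (intro measurable_restrict) auto
    have pre: "?shift -` PiE {..<n} A \<inter> space (noise n s) = PiE {..<n} (\<lambda>i. {x. c i + x \<in> A i})"
      unfolding noise_def by (auto simp: space_PiM PiE_def Pi_def extensional_def)
    have "emeasure (distr (noise n s) (PiM {..<n} (\<lambda>_. borel)) ?shift) (PiE {..<n} A)
      = emeasure (noise n s) (PiE {..<n} (\<lambda>i. {x. c i + x \<in> A i}))"
      using A by (subst emeasure_distr[OF meas]) (auto simp: pre intro!: sets_PiM_I_finite)
    also have "\<dots> = (\<Prod>i<n. emeasure (density lborel (normal_density 0 s)) {x. c i + x \<in> A i})"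
      unfolding noise_def by (rule P0.emeasure_PiM) auto
    also have "\<dots> = (\<Prod>i<n. emeasure (?M i) (A i))"
    proof (rule prod.cong[OF refl])
      fix i assume i: "i \<in> {..<n}"
      then have [measurable]: "A i \<in> sets borel" using A by auto
      have "indicator {x. c i + x \<in> A i} = (\<lambda>x. indicator (A i) (c i + x) :: ennreal)"
        by (auto simp: indicator_def)
      moreover have "{x. c i + x \<in> A i} \<in> sets borel" by measurable
      ultimately show "emeasure (density lborel (normal_density 0 s)) {x. c i + x \<in> A i}
          = emeasure (?M i) (A i)"
        using nn_integral_normal_density_shift[of "A i" s "c i"] by (simp add: emeasure_density)
    qed
    finally show "emeasure (distr (noise n s) (PiM {..<n} (\<lambda>_. borel)) ?shift) (PiE {..<n} A)
      = (\<Prod>i\<in>{..<n}. emeasure (?M i) (A i))" by simp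
  qed simp
qed

lemma PiM_density_lborel:
  fixes p :: "'i \<Rightarrow> real \<Rightarrow> real"
  assumes I: "finite I" and ps: "\<And>i. prob_space (density lborel (p i))"
    and pm[measurable]: "\<And>i. p i \<in> borel_measurable borel"
  shows "PiM I (\<lambda>i. density lborel (p i))
       = density (PiM I (\<lambda>_. lborel)) (\<lambda>y. \<Prod>i\<in>I. ennreal (p i (y i)))"
proof -
  interpret P: product_prob_space "\<lambda>i. density lborel (p i)"
    using ps by (intro product_prob_spaceI) auto
  interpret L: product_sigma_finite "\<lambda>_::'i. lborel :: real measure" by standard
  show ?thesis
  proof (rule P.PiM_eqI[symmetric])
    show "finite I" by fact
    show "sets (density (PiM I (\<lambda>_. lborel)) (\<lambda>y. \<Prod>i\<in>I. ennreal (p i (y i))))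
        = sets (PiM I (\<lambda>i. density lborel (p i)))"
      by (simp, intro sets_PiM_cong) auto
  next
    fix A assume "\<And>i. i \<in> I \<Longrightarrow> A i \<in> sets (density lborel (p i))"
    then have A[measurable]: "\<And>i. i \<in> I \<Longrightarrow> A i \<in> sets borel" by simp
    have PA: "PiE I A \<in> sets (PiM I (\<lambda>_. lborel))"
      using A I by (intro sets_PiM_I_finite) auto
    have "emeasure (density (PiM I (\<lambda>_. lborel)) (\<lambda>y. \<Prod>i\<in>I. ennreal (p i (y i)))) (PiE I A)
       = (\<integral>\<^sup>+ y. (\<Prod>i\<in>I. ennreal (p i (y i))) * indicator (PiE I A) y \<partial>PiM I (\<lambda>_. lborel))"
      using PA I by (subst emeasure_density) auto
    also have "\<dots> = (\<integral>\<^sup>+ y. (\<Prod>i\<in>I. ennreal (p i (y i)) * indicator (A i) (y i)) \<partial>PiM I (\<lambda>_. lborel))"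
    proof (rule nn_integral_cong)
      fix y assume "y \<in> space (PiM I (\<lambda>_. lborel :: real measure))"
      then have "indicator (PiE I A) y = (\<Prod>i\<in>I. indicator (A i) (y i) :: ennreal)"
        using I by (auto simp: space_PiM indicator_def PiE_def Pi_def prod_zero_iff)
      then show "(\<Prod>i\<in>I. ennreal (p i (y i))) * indicator (PiE I A) y
          = (\<Prod>i\<in>I. ennreal (p i (y i)) * indicator (A i) (y i))"
        by (simp add: prod.distrib)
    qed
    also have "\<dots> = (\<Prod>i\<in>I. \<integral>\<^sup>+ x. ennreal (p i x) * indicator (A i) x \<partial>lborel)"
      using I by (subst L.product_nn_integral_prod) auto
    also have "\<dots> = (\<Prod>i\<in>I. emeasure (density lborel (p i)) (A i))"
      by (intro prod.cong refl) (auto simp: emeasure_density)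
    finally show "emeasure (density (PiM I (\<lambda>_. lborel)) (\<lambda>y. \<Prod>i\<in>I. ennreal (p i (y i)))) (PiE I A)
       = (\<Prod>i\<in>I. emeasure (density lborel (p i)) (A i))" .
  qed
qed

lemma distr_noise_shift_density:
  assumes s: "0 < s"
  shows "distr (noise n s) (PiM {..<n} (\<lambda>_. borel)) (\<lambda>e. \<lambda>i\<in>{..<n}. c i + e i)
   = density (PiM {..<n} (\<lambda>_. lborel)) (\<lambda>y. \<Prod>i<n. ennreal (normal_density (c i) s (y i)))"
  using distr_noise_shift[OF s] PiM_density_lborel[of "{..<n}" "\<lambda>i. normal_density (c i) s"] s
  by (simp add: prob_space_normal_density)

section \<open>The density of the noisy observations\<close>

definition noisy_density ::
    "'a measure \<Rightarrow> ('a \<Rightarrow> real \<Rightarrow> real) \<Rightarrow> real \<Rightarrow> real list \<Rightarrow> (nat \<Rightarrow> real) \<Rightarrow> real" where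
  "noisy_density M f s xs y = (\<integral>\<omega>. (\<Prod>i<length xs. normal_density (f \<omega> (xs ! i)) s (y i)) \<partial>M)"

lemma noisy_density_nonneg: "0 \<le> noisy_density M f s xs y"
  unfolding noisy_density_def by (intro integral_nonneg_AE) (auto simp: prod_nonneg)

lemma noisy_density_measurable:
  assumes "noisy_process M f s"
  shows "(\<lambda>y. noisy_density M f s xs y) \<in> borel_measurable (PiM {..<length xs} (\<lambda>_. lborel))"
proof -
  interpret prob_space M using noisy_processD(1)[OF assms] .
  have [measurable]: "\<And>x. (\<lambda>\<omega>. f \<omega> x) \<in> borel_measurable M" using noisy_processD(3)[OF assms] .
  show ?thesis unfolding noisy_density_def normal_density_def by measurable
qed

lemma noisy_density_nn_integral:
  assumes np: "noisy_process M f s"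
  shows "(\<integral>\<^sup>+\<omega>. (\<Prod>i<length xs. ennreal (normal_density (f \<omega> (xs ! i)) s (y i))) \<partial>M)
    = ennreal (noisy_density M f s xs y)"
proof -
  interpret M: prob_space M using noisy_processD(1)[OF np] .
  have [measurable]: "\<And>x. (\<lambda>\<omega>. f \<omega> x) \<in> borel_measurable M" using noisy_processD(3)[OF np] .
  have "integrable M (\<lambda>\<omega>. \<Prod>i<length xs. normal_density (f \<omega> (xs ! i)) s (y i))"
    using prod_normal_density_le[where I="{..<length xs}" and s=s and x=y]
    by (intro M.integrable_const_bound[where B="(1 / sqrt (2 * pi * s\<^sup>2)) ^ length xs"])
      (auto simp: prod_nonneg normal_density_def)
  then show ?thesis
    unfolding noisy_density_def
    by (subst nn_integral_eq_integral[symmetric])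
      (auto simp: prod_nonneg prod_ennreal intro!: nn_integral_cong)
qed

lemma emeasure_Px_mixture:
  assumes np: "noisy_process M f s" and A: "A \<in> sets (PiM {..<length xs} (\<lambda>_. borel))"
  shows "emeasure (Px M f s xs) A = (\<integral>\<^sup>+\<omega>. emeasure (density (PiM {..<length xs} (\<lambda>_. lborel))
            (\<lambda>y. \<Prod>i<length xs. ennreal (normal_density (f \<omega> (xs ! i)) s (y i)))) A \<partial>M)"
proof -
  let ?n = "length xs"
  let ?T = "PiM {..<?n} (\<lambda>_. borel) :: (nat \<Rightarrow> real) measure"
  let ?Phi = "\<lambda>(\<omega>, e). \<lambda>i\<in>{..<?n}. f \<omega> (xs ! i) + (e::nat\<Rightarrow>real) i"
  have s: "0 < s" using noisy_processD(2)[OF np] .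
  have [measurable]: "\<And>x. (\<lambda>\<omega>. f \<omega> x) \<in> borel_measurable M" using noisy_processD(3)[OF np] .
  interpret Nz: prob_space "noise ?n s"
    unfolding noise_def using s by (intro prob_space_PiM prob_space_normal_density)
  have Phim: "?Phi \<in> measurable (M \<Otimes>\<^sub>M noise ?n s) ?T"
    unfolding noise_def by (simp add: split_beta') measurable
  have "emeasure (Px M f s xs) A
      = emeasure (M \<Otimes>\<^sub>M noise ?n s) (?Phi -` A \<inter> space (M \<Otimes>\<^sub>M noise ?n s))"
    unfolding Px_def using A by (simp add: emeasure_distr Phim)
  also have "\<dots> = (\<integral>\<^sup>+\<omega>. emeasure (noise ?n s)
                        (Pair \<omega> -` (?Phi -` A \<inter> space (M \<Otimes>\<^sub>M noise ?n s))) \<partial>M)"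
    using A Phim by (intro Nz.emeasure_pair_measure_alt) (auto intro: measurable_sets)
  also have "\<dots> = (\<integral>\<^sup>+\<omega>. emeasure (distr (noise ?n s) ?T (\<lambda>e. \<lambda>i\<in>{..<?n}. f \<omega> (xs ! i) + e i)) A \<partial>M)"
  proof (rule nn_integral_cong)
    fix \<omega> assume "\<omega> \<in> space M"
    then have "Pair \<omega> -` (?Phi -` A \<inter> space (M \<Otimes>\<^sub>M noise ?n s))
        = (\<lambda>e. \<lambda>i\<in>{..<?n}. f \<omega> (xs ! i) + e i) -` A \<inter> space (noise ?n s)"
      by (auto simp: space_pair_measure)
    moreover have "(\<lambda>e. \<lambda>i\<in>{..<?n}. f \<omega> (xs ! i) + e i) \<in> measurable (noise ?n s) ?T"
      unfolding noise_def by measurable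
    ultimately show "emeasure (noise ?n s) (Pair \<omega> -` (?Phi -` A \<inter> space (M \<Otimes>\<^sub>M noise ?n s)))
        = emeasure (distr (noise ?n s) ?T (\<lambda>e. \<lambda>i\<in>{..<?n}. f \<omega> (xs ! i) + e i)) A"
      using A by (simp add: emeasure_distr)
  qed
  finally show ?thesis by (simp only: distr_noise_shift_density[OF s])
qed

lemma Px_eq_density:
  assumes np: "noisy_process M f s"
  shows "Px M f s xs = density (PiM {..<length xs} (\<lambda>_. lborel)) (noisy_density M f s xs)"
proof -
  let ?n = "length xs"
  let ?L = "PiM {..<?n} (\<lambda>_. lborel) :: (nat \<Rightarrow> real) measure"
  let ?q = "\<lambda>\<omega> y. \<Prod>i<?n. ennreal (normal_density (f \<omega> (xs ! i)) s (y i))"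
  interpret M: prob_space M using noisy_processD(1)[OF np] .
  have [measurable]: "\<And>x. (\<lambda>\<omega>. f \<omega> x) \<in> borel_measurable M" using noisy_processD(3)[OF np] .
  interpret LF: finite_product_sigma_finite "\<lambda>_::nat. lborel :: real measure" "{..<?n}"
    by standard auto
  interpret MP: pair_sigma_finite M ?L by standard
  have qm: "(\<lambda>(\<omega>, y). ?q \<omega> y) \<in> borel_measurable (M \<Otimes>\<^sub>M ?L)"
    unfolding normal_density_def by measurable
  show ?thesis
  proof (rule measure_eqI)
    show "sets (Px M f s xs) = sets (density ?L (noisy_density M f s xs))"
      unfolding Px_def by (simp, intro sets_PiM_cong) auto
  next
    fix A assume "A \<in> sets (Px M f s xs)"
    then have A: "A \<in> sets (PiM {..<?n} (\<lambda>_. borel))" by (simp add: Px_def)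
    then have AL: "A \<in> sets ?L"
      using sets_PiM_cong[of "{..<?n}" "{..<?n}" "\<lambda>_. lborel :: real measure" "\<lambda>_. borel"] by simp
    have "emeasure (Px M f s xs) A = (\<integral>\<^sup>+\<omega>. \<integral>\<^sup>+y. ?q \<omega> y * indicator A y \<partial>?L \<partial>M)"
      unfolding emeasure_Px_mixture[OF np A]
      using AL qm by (intro nn_integral_cong) (simp add: emeasure_density)
    also have "\<dots> = (\<integral>\<^sup>+y. \<integral>\<^sup>+\<omega>. ?q \<omega> y * indicator A y \<partial>M \<partial>?L)"
      using AL qm by (intro MP.Fubini'[symmetric]) (simp add: split_beta')
    also have "\<dots> = (\<integral>\<^sup>+y. ennreal (noisy_density M f s xs y) * indicator A y \<partial>?L)"
      using qm by (intro nn_integral_cong)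
        (simp add: nn_integral_multc noisy_density_nn_integral[OF np, symmetric])
    also have "\<dots> = emeasure (density ?L (noisy_density M f s xs)) A"
      using AL noisy_density_measurable[OF np] by (simp add: emeasure_density)
    finally show "emeasure (Px M f s xs) A = emeasure (density ?L (noisy_density M f s xs)) A" .
  qed
qed

lemma Px_eq_iff_AE_noisy_density_eq:
  assumes np: "noisy_process M f s" and nq: "noisy_process N g t"
  shows "Px M f s xs = Px N g t xs \<longleftrightarrow>
    (AE y in PiM {..<length xs} (\<lambda>_. lborel). noisy_density M f s xs y = noisy_density N g t xs y)"
proof -
  interpret LF: finite_product_sigma_finite "\<lambda>_::nat. lborel :: real measure" "{..<length xs}"
    by standard auto
  show ?thesis
    unfolding Px_eq_density[OF np] Px_eq_density[OF nq]
    using noisy_density_measurable[OF np] noisy_density_measurable[OF nq]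
    by (subst LF.density_unique_iff) (auto simp: noisy_density_nonneg)
qed

lemma noisy_density_continuous:
  assumes np: "noisy_process M f s"
    and len: "\<And>k. length (ys k) = length xs"
    and conv: "\<And>i. i < length xs \<Longrightarrow> (\<lambda>k. ys k ! i) \<longlonglongrightarrow> xs ! i"
  shows "(\<lambda>k. noisy_density M f s (ys k) y) \<longlonglongrightarrow> noisy_density M f s xs y"
proof -
  interpret M: prob_space M using noisy_processD(1)[OF np] .
  have s: "0 < s" using noisy_processD(2)[OF np] .
  have [measurable]: "\<And>x. (\<lambda>\<omega>. f \<omega> x) \<in> borel_measurable M" using noisy_processD(3)[OF np] .
  let ?n = "length xs"
  let ?B = "(1 / sqrt (2 * pi * s\<^sup>2)) ^ ?n"
  show ?thesis
    unfolding noisy_density_def len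
  proof (rule integral_dominated_convergence[where w="\<lambda>_. ?B"])
    show "(\<lambda>\<omega>. \<Prod>i<?n. normal_density (f \<omega> (xs ! i)) s (y i)) \<in> borel_measurable M"
      unfolding normal_density_def by measurable
    show "(\<lambda>\<omega>. \<Prod>i<?n. normal_density (f \<omega> (ys k ! i)) s (y i)) \<in> borel_measurable M" for k
      unfolding normal_density_def by measurable
    show "integrable M (\<lambda>_. ?B)" by simp
    show "AE \<omega> in M. norm (\<Prod>i<?n. normal_density (f \<omega> (ys k ! i)) s (y i)) \<le> ?B" for k
      using prod_normal_density_le[where I="{..<?n}" and s=s and x=y]
      by (intro AE_I2) (simp add: prod_nonneg)
    show "AE \<omega> in M. (\<lambda>k. \<Prod>i<?n. normal_density (f \<omega> (ys k ! i)) s (y i))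
        \<longlonglongrightarrow> (\<Prod>i<?n. normal_density (f \<omega> (xs ! i)) s (y i))"
    proof (rule AE_I2)
      fix \<omega> assume \<omega>: "\<omega> \<in> space M"
      have "(\<lambda>k. normal_density (f \<omega> (ys k ! i)) s (y i)) \<longlonglongrightarrow> normal_density (f \<omega> (xs ! i)) s (y i)"
        if i: "i < ?n" for i
      proof -
        have "isCont (f \<omega>) (xs ! i)"
          using noisy_processD(4)[OF np \<omega>] by (simp add: continuous_on_eq_continuous_at)
        then have "(\<lambda>k. f \<omega> (ys k ! i)) \<longlonglongrightarrow> f \<omega> (xs ! i)"
          by (rule isCont_tendsto_compose[OF _ conv[OF i]])
        then show ?thesis
          unfolding normal_density_def using s by (intro tendsto_intros) simp_all
      qed
      then show "(\<lambda>k. \<Prod>i<?n. normal_density (f \<omega> (ys k ! i)) s (y i))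
          \<longlonglongrightarrow> (\<Prod>i<?n. normal_density (f \<omega> (xs ! i)) s (y i))"
        by (intro tendsto_prod) simp
    qed
  qed
qed

section \<open>Equality on a dense set of inputs\<close>

lemma dense_in_Rn_sequence:
  assumes D: "dense_in_Rn n J" and len: "length xs = n"
  obtains ys where "\<And>k. ys k \<in> J" "\<And>k. length (ys k) = n"
    "\<And>i. i < n \<Longrightarrow> (\<lambda>k. ys k ! i) \<longlonglongrightarrow> xs ! i"
proof -
  have "\<exists>ys. ys \<in> J \<and> length ys = n \<and> (\<forall>i<n. \<bar>ys ! i - xs ! i\<bar> < 1 / (real k + 1))"
    for k :: nat
  proof -
    have "(0::real) < 1 / (real k + 1)" by simp
    with D len show ?thesis unfolding dense_in_Rn_def by blast
  qed
  then obtain ys where ys: "\<And>k. ys k \<in> J" "\<And>k. length (ys k) = n"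
      "\<And>k i. i < n \<Longrightarrow> \<bar>ys k ! i - xs ! i\<bar> < 1 / (real k + 1)"
    by metis
  have "(\<lambda>k. ys k ! i) \<longlonglongrightarrow> xs ! i" if i: "i < n" for i
  proof -
    have "(\<lambda>k. 1 / (real k + 1)) \<longlonglongrightarrow> 0"
      using LIMSEQ_inverse_real_of_nat by (simp add: inverse_eq_divide add.commute)
    moreover have "\<forall>\<^sub>F k in sequentially. norm (ys k ! i - xs ! i) \<le> 1 / (real k + 1)"
      using ys(3)[OF i] by (intro always_eventually allI) (simp add: less_imp_le)
    ultimately have "(\<lambda>k. ys k ! i - xs ! i) \<longlonglongrightarrow> 0"
      by (rule Lim_null_comparison[rotated])
    then show ?thesis by (simp add: LIM_zero_cancel)
  qed
  with ys show ?thesis using that by blast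
qed

lemma Px_eq_of_dense_in_Rn:
  assumes np: "noisy_process M f s" and nq: "noisy_process N g t"
    and D: "dense_in_Rn n J" and eq: "\<And>ys. ys \<in> J \<Longrightarrow> Px M f s ys = Px N g t ys"
    and len: "length xs = n"
  shows "Px M f s xs = Px N g t xs"
proof -
  obtain ys where ys: "\<And>k. ys k \<in> J" "\<And>k. length (ys k) = n"
    and conv: "\<And>i. i < n \<Longrightarrow> (\<lambda>k. ys k ! i) \<longlonglongrightarrow> xs ! i"
    using dense_in_Rn_sequence[OF D len] by blast
  have "AE y in PiM {..<n} (\<lambda>_. lborel). noisy_density M f s (ys k) y = noisy_density N g t (ys k) y"
    for k using Px_eq_iff_AE_noisy_density_eq[OF np nq, of "ys k"] eq[OF ys(1)]
    unfolding ys(2) by simp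
  then have "AE y in PiM {..<n} (\<lambda>_. lborel).
      \<forall>k. noisy_density M f s (ys k) y = noisy_density N g t (ys k) y"
    by (simp add: AE_all_countable)
  then have "AE y in PiM {..<n} (\<lambda>_. lborel). noisy_density M f s xs y = noisy_density N g t xs y"
  proof (rule AE_mp, intro AE_I2 impI)
    fix y assume "\<forall>k. noisy_density M f s (ys k) y = noisy_density N g t (ys k) y"
    moreover have "(\<lambda>k. noisy_density M f s (ys k) y) \<longlonglongrightarrow> noisy_density M f s xs y"
      and "(\<lambda>k. noisy_density N g t (ys k) y) \<longlonglongrightarrow> noisy_density N g t xs y"
      using noisy_density_continuous[OF np] noisy_density_continuous[OF nq] ys(2) len conv by auto
    ultimately show "noisy_density M f s xs y = noisy_density N g t xs y"
      using LIMSEQ_unique by simp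
  qed
  then show ?thesis using Px_eq_iff_AE_noisy_density_eq[OF np nq, of xs] unfolding len by simp
qed

definition normal_law :: "real \<Rightarrow> real \<Rightarrow> real measure" where
  "normal_law m v = (if 0 < v then density lborel (normal_density m (sqrt v)) else return borel m)"

lemma normal_density_moments:
  assumes s: "0 < s"
  shows "integrable (density lborel (normal_density m s)) (\<lambda>x. x)"
    "integrable (density lborel (normal_density m s)) (\<lambda>x. x\<^sup>2)"
    "(\<integral>x. x \<partial>density lborel (normal_density m s)) = m"
    "(\<integral>x. x\<^sup>2 \<partial>density lborel (normal_density m s)) = s\<^sup>2 + m\<^sup>2"
proof -
  have i0: "integrable lborel (\<lambda>x. normal_density m s x)"
    using integrable_normal_density[OF s] by simp
  have i1: "integrable lborel (\<lambda>x. normal_density m s x * x)"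
    by (rule integrable_normal_moment_nz_1[OF s])
  have i2: "integrable lborel (\<lambda>x. normal_density m s x * (x - m)^2)"
    by (rule integrable_normal_moment[OF s])
  have expand: "(\<lambda>x. normal_density m s x * x\<^sup>2) = (\<lambda>x. normal_density m s x * (x - m)^2
      + 2 * m * (normal_density m s x * x) - m\<^sup>2 * normal_density m s x)"
    by (auto simp: fun_eq_iff power2_eq_square algebra_simps)
  show "integrable (density lborel (normal_density m s)) (\<lambda>x. x)"
    using i1 by (subst integrable_density) auto
  have "integrable lborel (\<lambda>x. normal_density m s x * x\<^sup>2)"
    unfolding expand using i0 i1 i2
    by (intro Bochner_Integration.integrable_diff Bochner_Integration.integrable_add
        integrable_mult_right) auto
  then show "integrable (density lborel (normal_density m s)) (\<lambda>x. x\<^sup>2)"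
    by (subst integrable_density) auto
  show "(\<integral>x. x \<partial>density lborel (normal_density m s)) = m"
    using integral_normal_moment_nz_1[OF s] by (subst integral_density) auto
  have "(\<integral>x. normal_density m s x * (x - m)^(2*1) \<partial>lborel) = s\<^sup>2"
    using integral_normal_moment_even[OF s, of m 1] by (simp add: power2_eq_square)
  then have "(\<integral>x. normal_density m s x * x\<^sup>2 \<partial>lborel) = s\<^sup>2 + 2 * m * m - m\<^sup>2"
    unfolding expand using i0 i1 i2 integral_normal_moment_nz_1[OF s] integral_normal_density[OF s]
    by (subst Bochner_Integration.integral_diff Bochner_Integration.integral_add
        integral_mult_right, (auto intro: integrable_mult_right)[2])+ simp
  then show "(\<integral>x. x\<^sup>2 \<partial>density lborel (normal_density m s)) = s\<^sup>2 + m\<^sup>2"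
    by (subst integral_density) (auto simp: power2_eq_square)
qed

lemma normal_law_moments:
  assumes "0 \<le> v"
  shows "integrable (normal_law m v) (\<lambda>x. x)" "integrable (normal_law m v) (\<lambda>x. x\<^sup>2)"
    "(\<integral>x. x \<partial>normal_law m v) = m" "(\<integral>x. x\<^sup>2 \<partial>normal_law m v) = v + m\<^sup>2"
proof -
  have "integrable (normal_law m v) (\<lambda>x. x) \<and> integrable (normal_law m v) (\<lambda>x. x\<^sup>2) \<and>
    (\<integral>x. x \<partial>normal_law m v) = m \<and> (\<integral>x. x\<^sup>2 \<partial>normal_law m v) = v + m\<^sup>2"
  proof (cases "0 < v")
    case True
    then show ?thesis using normal_density_moments[of "sqrt v" m] by (simp add: normal_law_def)
  next
    case False
    with assms have "v = 0" by simp
    then show ?thesis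
      by (simp add: normal_law_def integrable_iff_bounded nn_integral_return integral_return)
  qed
  then show "integrable (normal_law m v) (\<lambda>x. x)" "integrable (normal_law m v) (\<lambda>x. x\<^sup>2)"
    "(\<integral>x. x \<partial>normal_law m v) = m" "(\<integral>x. x\<^sup>2 \<partial>normal_law m v) = v + m\<^sup>2"
    by auto
qed

lemma real_gaussian_measurable: "real_gaussian M X \<Longrightarrow> X \<in> borel_measurable M"
  unfolding real_gaussian_def by (auto dest: distributed_measurable)

lemma real_gaussian_distr:
  assumes "prob_space M" and "real_gaussian M X"
  shows "\<exists>m v. 0 \<le> v \<and> distr M borel X = normal_law m v"
proof (cases "\<exists>m s. s > 0 \<and> distributed M lborel X (normal_density m s)")
  case True
  then obtain m s where s: "s > 0" and D: "distributed M lborel X (normal_density m s)" by blast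
  have "distr M borel X = distr M lborel X" by (rule distr_cong) auto
  also have "\<dots> = normal_law m (s\<^sup>2)"
    using D s by (simp add: distributed_def normal_law_def)
  finally show ?thesis by (intro exI[of _ m] exI[of _ "s\<^sup>2"]) simp
next
  case False
  then obtain c where c: "AE \<omega> in M. X \<omega> = c"
    using assms(2) by (auto simp: real_gaussian_def)
  have "distr M borel X = distr M borel (\<lambda>_. c)"
    using c real_gaussian_measurable[OF assms(2)] by (intro distr_cong_AE) auto
  also have "\<dots> = normal_law c 0" using assms(1) by (simp add: normal_law_def prob_space.distr_const)
  finally show ?thesis by (intro exI[of _ c] exI[of _ 0]) simp
qed

lemma real_gaussian_integrable:
  assumes "prob_space M" and G: "real_gaussian M X"
  shows "integrable M X" "integrable M (\<lambda>\<omega>. (X \<omega>)\<^sup>2)"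
proof -
  have [measurable]: "X \<in> borel_measurable M" using real_gaussian_measurable[OF G] .
  obtain m v where "0 \<le> v" "distr M borel X = normal_law m v"
    using real_gaussian_distr[OF assms] by blast
  then have "integrable (distr M borel X) (\<lambda>x. x)" "integrable (distr M borel X) (\<lambda>x. x\<^sup>2)"
    using normal_law_moments by simp_all
  then show "integrable M X" "integrable M (\<lambda>\<omega>. (X \<omega>)\<^sup>2)"
    by (simp_all add: integrable_distr_eq)
qed

lemma real_gaussian_distr_eq:
  assumes M: "prob_space M" and GX: "real_gaussian M X"
    and N: "prob_space N" and GY: "real_gaussian N Y"
    and mean: "(\<integral>\<omega>. X \<omega> \<partial>M) = (\<integral>\<omega>. Y \<omega> \<partial>N)"
    and square: "(\<integral>\<omega>. (X \<omega>)\<^sup>2 \<partial>M) = (\<integral>\<omega>. (Y \<omega>)\<^sup>2 \<partial>N)"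
  shows "distr M borel X = distr N borel Y"
proof -
  have moments: "(\<integral>\<omega>. Z \<omega> \<partial>K) = m \<and> (\<integral>\<omega>. (Z \<omega>)\<^sup>2 \<partial>K) = v + m\<^sup>2"
    if "0 \<le> v" "distr K borel Z = normal_law m v" "Z \<in> borel_measurable K"
    for K :: "'c measure" and Z :: "'c \<Rightarrow> real" and m v
  proof -
    have "(\<integral>\<omega>. Z \<omega> \<partial>K) = (\<integral>x. x \<partial>normal_law m v)"
      "(\<integral>\<omega>. (Z \<omega>)\<^sup>2 \<partial>K) = (\<integral>x. x\<^sup>2 \<partial>normal_law m v)"
      using that(2) integral_distr[OF that(3), of "\<lambda>x. x"] integral_distr[OF that(3), of "\<lambda>x. x\<^sup>2"]
      by simp_all
    then show ?thesis using normal_law_moments(3,4)[OF that(1)] by simp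
  qed
  obtain m v where v: "0 \<le> v" and X: "distr M borel X = normal_law m v"
    using real_gaussian_distr[OF M GX] by blast
  obtain m' v' where v': "0 \<le> v'" and Y: "distr N borel Y = normal_law m' v'"
    using real_gaussian_distr[OF N GY] by blast
  have "m = m'" and "v + m\<^sup>2 = v' + m'\<^sup>2"
    using moments[OF v X real_gaussian_measurable[OF GX]]
      moments[OF v' Y real_gaussian_measurable[OF GY]] mean square by auto
  then have "m = m'" "v = v'" by simp_all
  then show ?thesis using X Y by simp
qed

section \<open>Gaussian processes\<close>

lemma gaussian_process_lincomb:
  assumes "gaussian_process M f"
  shows "real_gaussian M (\<lambda>\<omega>. \<Sum>i<length xs. z i * f \<omega> (xs ! i))"
proof -
  have "real_gaussian M (\<lambda>\<omega>. \<Sum>i<length xs. map z [0..<length xs] ! i * f \<omega> (xs ! i))"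
  proof -
    have "length (map z [0..<length xs]) = length xs" by simp
    then show ?thesis using assms unfolding gaussian_process_def by blast
  qed
  moreover have "(\<lambda>\<omega>. \<Sum>i<length xs. map z [0..<length xs] ! i * f \<omega> (xs ! i))
      = (\<lambda>\<omega>. \<Sum>i<length xs. z i * f \<omega> (xs ! i))"
    by (auto simp: fun_eq_iff intro!: sum.cong)
  ultimately show ?thesis by simp
qed

lemma gaussian_process_pair:
  assumes "gaussian_process M f"
  shows "real_gaussian M (\<lambda>\<omega>. a * f \<omega> x + b * f \<omega> y)"
  using gaussian_process_lincomb[OF assms, where xs="[x, y]" and z="\<lambda>i. if i = 0 then a else b"]
  by (simp add: numeral_2_eq_2)

lemma gaussian_process_integrable:
  assumes M: "prob_space M" and G: "gaussian_process M f"
  shows "integrable M (\<lambda>\<omega>. f \<omega> x)" "integrable M (\<lambda>\<omega>. (f \<omega> x + f \<omega> y)\<^sup>2)"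
    "integrable M (\<lambda>\<omega>. (f \<omega> x)\<^sup>2)" "integrable M (\<lambda>\<omega>. f \<omega> x * f \<omega> y)"
proof -
  note pair_integrable = real_gaussian_integrable[OF M gaussian_process_pair[OF G]]
  show "integrable M (\<lambda>\<omega>. f \<omega> x)" using pair_integrable(1)[of 1 x 0 x] by simp
  show sum_sq: "integrable M (\<lambda>\<omega>. (f \<omega> x + f \<omega> y)\<^sup>2)" for x y
    using pair_integrable(2)[of 1 x 1 y] by simp
  show sq: "integrable M (\<lambda>\<omega>. (f \<omega> x)\<^sup>2)" for x
    using pair_integrable(2)[of 1 x 0 x] by simp
  have "integrable M (\<lambda>\<omega>. ((f \<omega> x + f \<omega> y)\<^sup>2 - (f \<omega> x)\<^sup>2 - (f \<omega> y)\<^sup>2) / 2)"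
    using sum_sq sq by auto
  then show "integrable M (\<lambda>\<omega>. f \<omega> x * f \<omega> y)"
    by (simp add: power2_eq_square algebra_simps)
qed

lemma gaussian_process_moments_eq:
  assumes M: "prob_space M" and GM: "gaussian_process M f"
    and N: "prob_space N" and GN: "gaussian_process N g"
    and pair_laws: "\<And>a b x y. distr M borel (\<lambda>\<omega>. a * f \<omega> x + b * f \<omega> y)
                              = distr N borel (\<lambda>\<omega>. a * g \<omega> x + b * g \<omega> y)"
  shows "(\<integral>\<omega>. f \<omega> x \<partial>M) = (\<integral>\<omega>. g \<omega> x \<partial>N)"
    "(\<integral>\<omega>. f \<omega> x * f \<omega> y \<partial>M) = (\<integral>\<omega>. g \<omega> x * g \<omega> y \<partial>N)"
proof -
  have E: "(\<integral>\<omega>. h (a * f \<omega> x + b * f \<omega> y) \<partial>M) = (\<integral>\<omega>. h (a * g \<omega> x + b * g \<omega> y) \<partial>N)"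
    if "h \<in> borel_measurable borel" for h :: "real \<Rightarrow> real" and a b x y
    using integral_distr[OF real_gaussian_measurable[OF gaussian_process_pair[OF GM]] that]
      integral_distr[OF real_gaussian_measurable[OF gaussian_process_pair[OF GN]] that]
    by (simp add: pair_laws)
  show "(\<integral>\<omega>. f \<omega> x \<partial>M) = (\<integral>\<omega>. g \<omega> x \<partial>N)" using E[of "\<lambda>u. u" 1 x 0 x] by simp
  have polarization: "(\<integral>\<omega>. h \<omega> x * h \<omega> y \<partial>K) = ((\<integral>\<omega>. (h \<omega> x + h \<omega> y)\<^sup>2 \<partial>K)
      - (\<integral>\<omega>. (h \<omega> x)\<^sup>2 \<partial>K) - (\<integral>\<omega>. (h \<omega> y)\<^sup>2 \<partial>K)) / 2"
    if "prob_space K" "gaussian_process K h" for K :: "'c measure" and h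
  proof -
    have "(\<lambda>\<omega>. h \<omega> x * h \<omega> y) = (\<lambda>\<omega>. ((h \<omega> x + h \<omega> y)\<^sup>2 - (h \<omega> x)\<^sup>2 - (h \<omega> y)\<^sup>2) / 2)"
      by (auto simp: fun_eq_iff power2_eq_square algebra_simps)
    then show ?thesis using gaussian_process_integrable(2,3)[OF that] by simp
  qed
  show "(\<integral>\<omega>. f \<omega> x * f \<omega> y \<partial>M) = (\<integral>\<omega>. g \<omega> x * g \<omega> y \<partial>N)"
    unfolding polarization[OF M GM] polarization[OF N GN]
    using E[of "\<lambda>u. u\<^sup>2" 1 x 1 y] E[of "\<lambda>u. u\<^sup>2" 1 x 0 x] E[of "\<lambda>u. u\<^sup>2" 1 y 0 y] by simp
qed

lemma gaussian_process_lincomb_laws_eq: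
  assumes M: "prob_space M" and GM: "gaussian_process M f"
    and N: "prob_space N" and GN: "gaussian_process N g"
    and pair_laws: "\<And>a b x y. distr M borel (\<lambda>\<omega>. a * f \<omega> x + b * f \<omega> y)
                              = distr N borel (\<lambda>\<omega>. a * g \<omega> x + b * g \<omega> y)"
  shows "distr M borel (\<lambda>\<omega>. \<Sum>i<length xs. z i * f \<omega> (xs ! i))
       = distr N borel (\<lambda>\<omega>. \<Sum>i<length xs. z i * g \<omega> (xs ! i))"
proof (rule real_gaussian_distr_eq[OF M gaussian_process_lincomb[OF GM] N gaussian_process_lincomb[OF GN]])
  let ?m = "length xs"
  note moments = gaussian_process_moments_eq[OF M GM N GN pair_laws]
  have square: "(\<Sum>i<?m. z i * h \<omega> (xs ! i))\<^sup>2
      = (\<Sum>i<?m. \<Sum>j<?m. z i * z j * (h \<omega> (xs ! i) * h \<omega> (xs ! j)))"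
    for h :: "'c \<Rightarrow> real \<Rightarrow> real" and \<omega>
    by (simp add: power2_eq_square sum_product algebra_simps)
  have "(\<integral>\<omega>. (\<Sum>i<?m. z i * f \<omega> (xs ! i)) \<partial>M) = (\<Sum>i<?m. z i * (\<integral>\<omega>. f \<omega> (xs ! i) \<partial>M))"
    using gaussian_process_integrable(1)[OF M GM] by (subst Bochner_Integration.integral_sum) auto
  also have "\<dots> = (\<Sum>i<?m. z i * (\<integral>\<omega>. g \<omega> (xs ! i) \<partial>N))" using moments(1) by simp
  also have "\<dots> = (\<integral>\<omega>. (\<Sum>i<?m. z i * g \<omega> (xs ! i)) \<partial>N)"
    using gaussian_process_integrable(1)[OF N GN] by (subst Bochner_Integration.integral_sum) auto
  finally show "(\<integral>\<omega>. (\<Sum>i<?m. z i * f \<omega> (xs ! i)) \<partial>M) = (\<integral>\<omega>. (\<Sum>i<?m. z i * g \<omega> (xs ! i)) \<partial>N)" .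
  have "(\<integral>\<omega>. (\<Sum>i<?m. z i * f \<omega> (xs ! i))\<^sup>2 \<partial>M)
      = (\<Sum>i<?m. \<Sum>j<?m. z i * z j * (\<integral>\<omega>. f \<omega> (xs ! i) * f \<omega> (xs ! j) \<partial>M))"
    unfolding square using gaussian_process_integrable(4)[OF M GM]
    by (simp add: Bochner_Integration.integral_sum Bochner_Integration.integrable_sum)
  also have "\<dots> = (\<Sum>i<?m. \<Sum>j<?m. z i * z j * (\<integral>\<omega>. g \<omega> (xs ! i) * g \<omega> (xs ! j) \<partial>N))"
    using moments(2) by simp
  also have "\<dots> = (\<integral>\<omega>. (\<Sum>i<?m. z i * g \<omega> (xs ! i))\<^sup>2 \<partial>N)"
    unfolding square using gaussian_process_integrable(4)[OF N GN]
    by (simp add: Bochner_Integration.integral_sum Bochner_Integration.integrable_sum)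
  finally show "(\<integral>\<omega>. (\<Sum>i<?m. z i * f \<omega> (xs ! i))\<^sup>2 \<partial>M) = (\<integral>\<omega>. (\<Sum>i<?m. z i * g \<omega> (xs ! i))\<^sup>2 \<partial>N)" .
qed

section \<open>Characteristic functions of the noisy observations\<close>

lemma char_noise:
  assumes s: "0 < s"
  shows "(\<integral>e. iexp (\<Sum>i<n. w i * e i) \<partial>noise n s) = complex_of_real (\<Prod>i<n. exp (- (s * w i)\<^sup>2 / 2))"
proof -
  let ?D = "\<lambda>_::nat. density lborel (normal_density 0 s)"
  interpret P0: product_prob_space ?D
    using s by (intro product_prob_spaceI prob_space_normal_density)
  have "(\<integral>e. iexp (\<Sum>i<n. w i * e i) \<partial>noise n s) = (\<integral>e. (\<Prod>i<n. iexp (w i * e i)) \<partial>noise n s)"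
    by (simp add: exp_sum sum_distrib_left)
  also have "\<dots> = (\<Prod>i<n. \<integral>x. iexp (w i * x) \<partial>?D i)"
    unfolding noise_def
    by (rule P0.product_integral_prod)
      (auto intro!: P0.M.integrable_const_bound[where B=1] simp: norm_exp_i_times)
  also have "\<dots> = (\<Prod>i<n. complex_of_real (exp (- (s * w i)\<^sup>2 / 2)))"
    by (simp only: char_centered_normal[OF s])
  finally show ?thesis by simp
qed

lemma char_Px:
  assumes np: "noisy_process M f s"
  shows "(\<integral>y. iexp (\<Sum>i<length xs. w i * y i) \<partial>Px M f s xs)
    = (\<integral>\<omega>. iexp (\<Sum>i<length xs. w i * f \<omega> (xs ! i)) \<partial>M)
      * complex_of_real (\<Prod>i<length xs. exp (- (s * w i)\<^sup>2 / 2))"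
proof -
  let ?n = "length xs"
  let ?T = "PiM {..<?n} (\<lambda>_. borel) :: (nat \<Rightarrow> real) measure"
  interpret M: prob_space M using noisy_processD(1)[OF np] .
  have s: "0 < s" using noisy_processD(2)[OF np] .
  have [measurable]: "\<And>x. (\<lambda>\<omega>. f \<omega> x) \<in> borel_measurable M" using noisy_processD(3)[OF np] .
  interpret Nz: prob_space "noise ?n s"
    unfolding noise_def using s by (intro prob_space_PiM prob_space_normal_density)
  interpret MN: pair_prob_space M "noise ?n s" by standard
  let ?Phi = "\<lambda>(\<omega>, e). \<lambda>i\<in>{..<?n}. f \<omega> (xs ! i) + (e::nat\<Rightarrow>real) i"
  let ?G = "\<lambda>p. iexp (\<Sum>i<?n. w i * (f (fst p) (xs ! i) + snd p i))"
  have Phim: "?Phi \<in> measurable (M \<Otimes>\<^sub>M noise ?n s) ?T"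
    unfolding noise_def by (simp add: split_beta') measurable
  have Gm: "?G \<in> borel_measurable (M \<Otimes>\<^sub>M noise ?n s)"
    unfolding noise_def by measurable
  have Gint: "integrable (M \<Otimes>\<^sub>M noise ?n s) ?G"
    by (rule MN.P.integrable_const_bound[where B=1]; (fact Gm | simp add: norm_exp_i_times))
  have "(\<integral>y. iexp (\<Sum>i<?n. w i * y i) \<partial>Px M f s xs)
      = (\<integral>p. iexp (\<Sum>i<?n. w i * ?Phi p i) \<partial>(M \<Otimes>\<^sub>M noise ?n s))"
    unfolding Px_def by (rule integral_distr[OF Phim]) measurable
  also have "\<dots> = (\<integral>p. ?G p \<partial>(M \<Otimes>\<^sub>M noise ?n s))"
    by (intro Bochner_Integration.integral_cong refl arg_cong[where f=iexp] arg_cong[where f=of_real]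
        sum.cong) (auto simp: split_beta')
  also have "\<dots> = (\<integral>\<omega>. \<integral>e. ?G (\<omega>, e) \<partial>noise ?n s \<partial>M)"
    by (rule MN.integral_fst'[OF Gint, symmetric])
  also have "\<dots> = (\<integral>\<omega>. iexp (\<Sum>i<?n. w i * f \<omega> (xs ! i))
                        * complex_of_real (\<Prod>i<?n. exp (- (s * w i)\<^sup>2 / 2)) \<partial>M)"
  proof (rule Bochner_Integration.integral_cong[OF refl])
    fix \<omega>
    have "?G (\<omega>, e) = iexp (\<Sum>i<?n. w i * f \<omega> (xs ! i)) * iexp (\<Sum>i<?n. w i * e i)" for e
      by (simp add: exp_add[symmetric] sum.distrib distrib_left algebra_simps)
    then have "(\<integral>e. ?G (\<omega>, e) \<partial>noise ?n s)
        = iexp (\<Sum>i<?n. w i * f \<omega> (xs ! i)) * (\<integral>e. iexp (\<Sum>i<?n. w i * e i) \<partial>noise ?n s)"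
      by simp
    then show "(\<integral>e. ?G (\<omega>, e) \<partial>noise ?n s) = iexp (\<Sum>i<?n. w i * f \<omega> (xs ! i))
        * complex_of_real (\<Prod>i<?n. exp (- (s * w i)\<^sup>2 / 2))"
      by (simp only: char_noise[OF s])
  qed
  finally show ?thesis by simp
qed

lemma pair_char_eq_of_Px_eq:
  assumes np: "noisy_process M f s" and nq: "noisy_process N g t" and n: "2 \<le> n"
    and eq: "\<And>xs. length xs = n \<Longrightarrow> Px M f s xs = Px N g t xs"
  shows "(\<integral>\<omega>. iexp (a * f \<omega> x + b * f \<omega> y) \<partial>M)
        * complex_of_real (exp (- (s * a)\<^sup>2 / 2) * exp (- (s * b)\<^sup>2 / 2))
      = (\<integral>\<omega>. iexp (a * g \<omega> x + b * g \<omega> y) \<partial>N)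
        * complex_of_real (exp (- (t * a)\<^sup>2 / 2) * exp (- (t * b)\<^sup>2 / 2))"
proof -
  obtain k where k: "n = Suc (Suc k)" using n by (metis add_2_eq_Suc le_Suc_ex)
  define xs where "xs = x # y # replicate k x"
  define w where "w i = (if i = 0 then a else if i = 1 then b else 0)" for i :: nat
  have "(\<integral>z. iexp (\<Sum>i<length xs. w i * z i) \<partial>Px M f s xs)
      = (\<integral>z. iexp (\<Sum>i<length xs. w i * z i) \<partial>Px N g t xs)"
    using eq[of xs] k by (simp add: xs_def)
  then show ?thesis
    unfolding char_Px[OF np] char_Px[OF nq]
    by (simp add: xs_def w_def sum.lessThan_Suc_shift prod.lessThan_Suc_shift
        del: sum.lessThan_Suc prod.lessThan_Suc)
qed

lemma noise_eq_of_Px_eq: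
  assumes np: "noisy_process M f s" and nq: "noisy_process N g t" and n: "2 \<le> n"
    and eq: "\<And>xs. length xs = n \<Longrightarrow> Px M f s xs = Px N g t xs"
  shows "s = t"
proof -
  have "complex_of_real (exp (- s\<^sup>2 / 2) * exp (- s\<^sup>2 / 2))
      = complex_of_real (exp (- t\<^sup>2 / 2) * exp (- t\<^sup>2 / 2))"
    using pair_char_eq_of_Px_eq[OF assms, of 1 x "-1" x] noisy_processD(1)[OF np] noisy_processD(1)[OF nq]
    by (simp add: prob_space.prob_space)
  then have "exp (- s\<^sup>2) = exp (- t\<^sup>2)"
    unfolding of_real_eq_iff by (simp add: exp_add[symmetric])
  then show "s = t"
    using noisy_processD(2)[OF np] noisy_processD(2)[OF nq] by (simp add: power2_eq_iff_nonneg)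
qed

lemma pair_laws_eq_of_Px_eq:
  assumes np: "noisy_process M f s" and nq: "noisy_process N g t" and n: "2 \<le> n"
    and eq: "\<And>xs. length xs = n \<Longrightarrow> Px M f s xs = Px N g t xs"
  shows "distr M borel (\<lambda>\<omega>. a * f \<omega> x + b * f \<omega> y) = distr N borel (\<lambda>\<omega>. a * g \<omega> x + b * g \<omega> y)"
proof (rule Levy_uniqueness)
  interpret M: prob_space M using noisy_processD(1)[OF np] .
  interpret N: prob_space N using noisy_processD(1)[OF nq] .
  have [measurable]: "\<And>x. (\<lambda>\<omega>. f \<omega> x) \<in> borel_measurable M" using noisy_processD(3)[OF np] .
  have [measurable]: "\<And>x. (\<lambda>\<omega>. g \<omega> x) \<in> borel_measurable N" using noisy_processD(3)[OF nq] .
  have char_eq: "(\<integral>\<omega>. iexp (a * f \<omega> x + b * f \<omega> y) \<partial>M) = (\<integral>\<omega>. iexp (a * g \<omega> x + b * g \<omega> y) \<partial>N)"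
    for a b
    using pair_char_eq_of_Px_eq[OF assms, of a x b y] noise_eq_of_Px_eq[OF assms] by simp
  show "real_distribution (distr M borel (\<lambda>\<omega>. a * f \<omega> x + b * f \<omega> y))"
    by (intro M.real_distribution_distr) measurable
  show "real_distribution (distr N borel (\<lambda>\<omega>. a * g \<omega> x + b * g \<omega> y))"
    by (intro N.real_distribution_distr) measurable
  show "char (distr M borel (\<lambda>\<omega>. a * f \<omega> x + b * f \<omega> y))
      = char (distr N borel (\<lambda>\<omega>. a * g \<omega> x + b * g \<omega> y))"
  proof
    fix u
    have "char (distr M borel (\<lambda>\<omega>. a * f \<omega> x + b * f \<omega> y)) u
        = (\<integral>\<omega>. iexp ((u * a) * f \<omega> x + (u * b) * f \<omega> y) \<partial>M)"
      unfolding char_def by (subst integral_distr) (auto simp: algebra_simps)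
    also have "\<dots> = (\<integral>\<omega>. iexp ((u * a) * g \<omega> x + (u * b) * g \<omega> y) \<partial>N)" by (rule char_eq)
    also have "\<dots> = char (distr N borel (\<lambda>\<omega>. a * g \<omega> x + b * g \<omega> y)) u"
      unfolding char_def by (subst integral_distr) (auto simp: algebra_simps)
    finally show "char (distr M borel (\<lambda>\<omega>. a * f \<omega> x + b * f \<omega> y)) u
        = char (distr N borel (\<lambda>\<omega>. a * g \<omega> x + b * g \<omega> y)) u" .
  qed
qed

lemma noisy_density_fourier:
  assumes np: "noisy_process M f s"
  shows "complex_of_real (noisy_density M f s xs y)
    = complex_of_real ((1 / sqrt (2 * pi * s\<^sup>2)) ^ length xs)
      * (\<integral>z. (\<integral>u. iexp ((\<Sum>i<length xs. y i * z i / s) - u)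
                  \<partial>distr M borel (\<lambda>\<omega>. \<Sum>i<length xs. (z i / s) * f \<omega> (xs ! i)))
           \<partial>PiM {..<length xs} (\<lambda>_. std_normal_distribution))"
proof -
  let ?m = "length xs"
  let ?Z = "PiM {..<?m} (\<lambda>_. std_normal_distribution)"
  let ?C = "complex_of_real ((1 / sqrt (2 * pi * s\<^sup>2)) ^ ?m)"
  let ?H = "\<lambda>\<omega> z. iexp (\<Sum>i<?m. ((y i - f \<omega> (xs ! i)) / s) * z i)"
  interpret M: prob_space M using noisy_processD(1)[OF np] .
  have s: "0 < s" using noisy_processD(2)[OF np] .
  have [measurable]: "\<And>x. (\<lambda>\<omega>. f \<omega> x) \<in> borel_measurable M" using noisy_processD(3)[OF np] .
  interpret Z: product_prob_space "\<lambda>_::nat. std_normal_distribution"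
    by (intro product_prob_spaceI prob_space_normal_density) simp
  interpret ZP: prob_space ?Z by (intro prob_space_PiM prob_space_normal_density) simp
  interpret MZ: pair_prob_space M ?Z by standard
  have Hm: "(\<lambda>(\<omega>, z). ?H \<omega> z) \<in> borel_measurable (M \<Otimes>\<^sub>M ?Z)" by measurable
  have Hint: "integrable (M \<Otimes>\<^sub>M ?Z) (\<lambda>(\<omega>, z). ?H \<omega> z)"
    by (rule MZ.P.integrable_const_bound[where B=1]; (fact Hm | simp add: split_beta' norm_exp_i_times))
  have "complex_of_real (noisy_density M f s xs y) = (\<integral>\<omega>. ?C * (\<integral>z. ?H \<omega> z \<partial>?Z) \<partial>M)"
    unfolding noisy_density_def integral_complex_of_real[symmetric]
    by (simp only: prod_normal_density_eq_integral[OF s])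
  also have "\<dots> = ?C * (\<integral>z. \<integral>\<omega>. ?H \<omega> z \<partial>M \<partial>?Z)"
    using MZ.Fubini_integral[of "\<lambda>\<omega> z. ?H \<omega> z"] Hint by simp
  also have "(\<lambda>z. \<integral>\<omega>. ?H \<omega> z \<partial>M) = (\<lambda>z. \<integral>u. iexp ((\<Sum>i<?m. y i * z i / s) - u)
                  \<partial>distr M borel (\<lambda>\<omega>. \<Sum>i<?m. (z i / s) * f \<omega> (xs ! i)))"
  proof
    fix z
    have "(\<integral>\<omega>. ?H \<omega> z \<partial>M)
        = (\<integral>\<omega>. iexp ((\<Sum>i<?m. y i * z i / s) - (\<Sum>i<?m. (z i / s) * f \<omega> (xs ! i))) \<partial>M)"
      by (intro Bochner_Integration.integral_cong refl arg_cong[where f=iexp])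
        (simp add: sum_subtractf[symmetric] diff_divide_distrib algebra_simps)
    then show "(\<integral>\<omega>. ?H \<omega> z \<partial>M) = (\<integral>u. iexp ((\<Sum>i<?m. y i * z i / s) - u)
        \<partial>distr M borel (\<lambda>\<omega>. \<Sum>i<?m. (z i / s) * f \<omega> (xs ! i)))"
      by (subst integral_distr) auto
  qed
  finally show ?thesis .
qed

lemma Px_eq_of_lincomb_laws_eq:
  assumes np: "noisy_process M f s" and nq: "noisy_process N g s"
    and laws: "\<And>z. distr M borel (\<lambda>\<omega>. \<Sum>i<length xs. z i * f \<omega> (xs ! i))
                  = distr N borel (\<lambda>\<omega>. \<Sum>i<length xs. z i * g \<omega> (xs ! i))"
  shows "Px M f s xs = Px N g s xs"
proof -
  have "complex_of_real (noisy_density M f s xs y) = complex_of_real (noisy_density N g s xs y)" for y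
    unfolding noisy_density_fourier[OF np] noisy_density_fourier[OF nq] laws ..
  then show ?thesis unfolding Px_eq_density[OF np] Px_eq_density[OF nq] by simp
qed

lemma gaussian_Px_eq_of_Px_eq_length:
  assumes np: "noisy_process M f s" and nq: "noisy_process N g t"
    and GM: "gaussian_process M f" and GN: "gaussian_process N g" and n: "2 \<le> n"
    and eq: "\<And>ys. length ys = n \<Longrightarrow> Px M f s ys = Px N g t ys"
  shows "Px M f s xs = Px N g t xs"
proof -
  have "distr M borel (\<lambda>\<omega>. \<Sum>i<length xs. z i * f \<omega> (xs ! i))
      = distr N borel (\<lambda>\<omega>. \<Sum>i<length xs. z i * g \<omega> (xs ! i))" for z
    using gaussian_process_lincomb_laws_eq[OF noisy_processD(1)[OF np] GM noisy_processD(1)[OF nq] GN]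
      pair_laws_eq_of_Px_eq[OF np nq n eq] by blast
  moreover have "s = t" using noise_eq_of_Px_eq[OF np nq n eq] .
  ultimately show ?thesis using Px_eq_of_lincomb_laws_eq[OF np] nq by blast
qed

theorem mainTheorem7:
  fixes M :: "'a measure" and f :: "'a \<Rightarrow> real \<Rightarrow> real" and s :: real
    and N :: "'b measure" and g :: "'b \<Rightarrow> real \<Rightarrow> real" and t :: real
  assumes "noisy_process M f s" and "noisy_process N g t"
  shows "(\<forall>J. J \<subseteq> {xs. xs \<noteq> []} \<and> dense_in_I J \<and> (\<forall>xs\<in>J. Px M f s xs = Px N g t xs)
            \<longrightarrow> (\<forall>xs. xs \<noteq> [] \<longrightarrow> Px M f s xs = Px N g t xs))
       \<and> (gaussian_process M f \<and> gaussian_process N g \<longrightarrow>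
            (\<forall>n\<ge>2. \<forall>J. J \<subseteq> {xs. length xs = n} \<and> dense_in_Rn n J \<and>
                (\<forall>xs\<in>J. Px M f s xs = Px N g t xs)
              \<longrightarrow> (\<forall>xs. xs \<noteq> [] \<longrightarrow> Px M f s xs = Px N g t xs)))"
proof (intro conjI allI impI)
  fix J :: "real list set" and xs :: "real list"
  assume J: "J \<subseteq> {xs. xs \<noteq> []} \<and> dense_in_I J \<and> (\<forall>xs\<in>J. Px M f s xs = Px N g t xs)"
    and "xs \<noteq> []"
  then have "dense_in_Rn (length xs) J" unfolding dense_in_I_def by (simp add: Suc_le_eq)
  then show "Px M f s xs = Px N g t xs"
    using Px_eq_of_dense_in_Rn[OF assms] J by blast
next
  fix n :: nat and J :: "real list set" and xs :: "real list"
  assume G: "gaussian_process M f \<and> gaussian_process N g" and n: "2 \<le> n"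
    and J: "J \<subseteq> {xs. length xs = n} \<and> dense_in_Rn n J \<and> (\<forall>xs\<in>J. Px M f s xs = Px N g t xs)"
  have "Px M f s ys = Px N g t ys" if "length ys = n" for ys
    using Px_eq_of_dense_in_Rn[OF assms _ _ that] J by blast
  then show "Px M f s xs = Px N g t xs"
    using gaussian_Px_eq_of_Px_eq_length[OF assms] G n by blast
qed

end
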